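(* Let $\mathbf{L}\in\mathbb{R}^{N_1\times N_2}$ satisfy Assumption 1 with $n$ clusters of sizes $n_1,\dots,n_n$, and suppose $\operatorname{rank}(\mathbf{L})=r$. Assume $r/n\ge 18\log\max_i n_i$ and $n_i\ge 96\,\frac{r}{n}\log n_i$ for all $1\le i\le n$. Then $$\mathbb{P}\left[\mu_v<\frac{1}{n}\cdot\frac{0.5\,N_2}{\min_i n_i}\right]\le 2\sum_{i=1}^n n_i^{-5},$$ where $\mu_v$ is the row-space incoherence parameter of $\mathbf{L}$.
   Context: Assumption 1: $\mathbf{L}=[\mathbf{U}_1\mathbf{Q}_1\ \cdots\ \mathbf{U}_n\mathbf{Q}_n]$, where for each $i$, $\mathbf{U}_i\in\mathbb{R}^{N_1\times r/n}$ has column space a uniformly random $r/n$-dimensional subspace of $\mathbb{R}^{N_1}$, and $\mathbf{Q}_i\in\mathbb{R}^{r/n\times n_i}$ has row space a uniformly random $r/n$-dimensional subspace of $\mathbb{R}^{n_i}$ (all drawn independently), with $\sum_{i=1}^n n_i=N_2$ and $\min_i n_i$ much larger than $r/n$. The compact SVD of $\mathbf{L}$ is $\mathbf{U}\boldsymbol{\Sigma}\mathbf{V}^T$ with $\mathbf{V}\in\mathbb{R}^{N_2\times r}$; $\mathbf{e}_i$ is the $i$-th standard basis vector of $\mathbb{R}^{N_2}$; the row-space incoherence parameter $\mu_v$ is the smallest constant such that $\max_{1\le i\le N_2}\|\mathbf{e}_i^T\mathbf{V}\|_2^2\le\mu_v r/N_2$. *)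

theory Defs
  imports "HOL-Probability.Probability"
begin

text \<open>Matrices are represented as functions on index pairs, (row, column),
  with the dimensions carried separately; a p x q matrix is extensional on
  the index set {..<p} x {..<q}.\<close>

type_synonym rmat = "nat \<times> nat \<Rightarrow> real"

definition matM :: "nat \<Rightarrow> nat \<Rightarrow> rmat measure" where
  "matM p q = PiM ({..<p} \<times> {..<q}) (\<lambda>_. borel)"

definition mmul :: "nat \<Rightarrow> nat \<Rightarrow> nat \<Rightarrow> rmat \<Rightarrow> rmat \<Rightarrow> rmat" where
  "mmul p k q A B = restrict (\<lambda>(i,j). \<Sum>l<k. A (i,l) * B (l,j)) ({..<p} \<times> {..<q})"

definition mtrans :: "nat \<Rightarrow> nat \<Rightarrow> rmat \<Rightarrow> rmat" where
  "mtrans p q A = restrict (\<lambda>(i,j). A (j,i)) ({..<q} \<times> {..<p})"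

definition mulv :: "nat \<Rightarrow> nat \<Rightarrow> rmat \<Rightarrow> (nat \<Rightarrow> real) \<Rightarrow> (nat \<Rightarrow> real)" where
  "mulv p q A c = (\<lambda>i. if i < p then (\<Sum>j<q. A (i,j) * c j) else 0)"

definition colspace :: "nat \<Rightarrow> nat \<Rightarrow> rmat \<Rightarrow> (nat \<Rightarrow> real) set" where
  "colspace p q A = {mulv p q A c | c. True}"

definition colrank :: "nat \<Rightarrow> nat \<Rightarrow> rmat \<Rightarrow> nat" where
  "colrank p q A = Max {card J | J. J \<subseteq> {..<q} \<and>
     (\<forall>c. (\<forall>i<p. (\<Sum>j\<in>J. c j * A (i,j)) = 0) \<longrightarrow> (\<forall>j\<in>J. c j = 0))}"

definition orthogonal_mat :: "nat \<Rightarrow> rmat \<Rightarrow> bool" where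
  "orthogonal_mat p Om \<longleftrightarrow> Om \<in> extensional ({..<p} \<times> {..<p}) \<and>
     (\<forall>i<p. \<forall>j<p. (\<Sum>k<p. Om (k,i) * Om (k,j)) = (if i = j then 1 else 0))"

definition colproj :: "nat \<Rightarrow> nat \<Rightarrow> rmat \<Rightarrow> rmat" where
  "colproj p q A = (THE P. P \<in> extensional ({..<p} \<times> {..<p}) \<and>
     (\<forall>i<p. \<forall>j<p. P (i,j) = P (j,i)) \<and>
     (\<forall>i<p. \<forall>j<p. (\<Sum>k<p. P (i,k) * P (k,j)) = P (i,j)) \<and>
     colspace p p P = colspace p q A)"

text \<open>The random p x d matrix X (on probability space M) has as column space a
  uniformly random d-dimensional subspace of R^p: X is a random matrix, its
  column space has dimension d almost surely, and the distribution of the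
  column space (encoded by its orthogonal projector) is invariant under all
  rotations of R^p (the uniform, i.e. Haar, distribution on the Grassmannian
  is the unique such distribution).\<close>
definition unif_colspace :: "'a measure \<Rightarrow> nat \<Rightarrow> nat \<Rightarrow> ('a \<Rightarrow> rmat) \<Rightarrow> bool" where
  "unif_colspace M p d X \<longleftrightarrow>
     X \<in> measurable M (matM p d) \<and>
     (AE \<omega> in M. colrank p d (X \<omega>) = d) \<and>
     (\<forall>Om. orthogonal_mat p Om \<longrightarrow>
        distr M (matM p p) (\<lambda>\<omega>. colproj p d (mmul p p d Om (X \<omega>)))
        = distr M (matM p p) (\<lambda>\<omega>. colproj p d (X \<omega>)))"

definition unif_rowspace :: "'a measure \<Rightarrow> nat \<Rightarrow> nat \<Rightarrow> ('a \<Rightarrow> rmat) \<Rightarrow> bool" where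
  "unif_rowspace M d q X \<longleftrightarrow>
     X \<in> measurable M (matM d q) \<and>
     unif_colspace M q d (\<lambda>\<omega>. mtrans d q (X \<omega>))"

definition offs :: "(nat \<Rightarrow> nat) \<Rightarrow> nat \<Rightarrow> nat" where
  "offs ns i = (\<Sum>k<i. ns k)"

text \<open>The block matrix L = [U_1 Q_1 ... U_n Q_n] (N1 x sum ns), where U_i is
  N1 x d and Q_i is d x ns i.\<close>
definition clusterL :: "nat \<Rightarrow> nat \<Rightarrow> nat \<Rightarrow> (nat \<Rightarrow> nat) \<Rightarrow> (nat \<Rightarrow> rmat) \<Rightarrow> (nat \<Rightarrow> rmat) \<Rightarrow> rmat" where
  "clusterL N1 n d ns U Q = restrict (\<lambda>(a,b).
      let i = (THE i. i < n \<and> offs ns i \<le> b \<and> b < offs ns i + ns i)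
      in (\<Sum>l<d. U i (a,l) * Q i (l, b - offs ns i)))
    ({..<N1} \<times> {..<(\<Sum>i<n. ns i)})"

definition compact_svd :: "nat \<Rightarrow> nat \<Rightarrow> nat \<Rightarrow> rmat \<Rightarrow> rmat \<Rightarrow> (nat \<Rightarrow> real) \<Rightarrow> rmat \<Rightarrow> bool" where
  "compact_svd N1 N2 r L U s V \<longleftrightarrow>
     U \<in> extensional ({..<N1} \<times> {..<r}) \<and> V \<in> extensional ({..<N2} \<times> {..<r}) \<and>
     (\<forall>j<r. \<forall>k<r. (\<Sum>a<N1. U (a,j) * U (a,k)) = (if j = k then 1 else 0)) \<and>
     (\<forall>j<r. \<forall>k<r. (\<Sum>b<N2. V (b,j) * V (b,k)) = (if j = k then 1 else 0)) \<and>
     (\<forall>j<r. s j > 0) \<and>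
     (\<forall>a<N1. \<forall>b<N2. L (a,b) = (\<Sum>j<r. U (a,j) * s j * V (b,j)))"

definition svdV :: "nat \<Rightarrow> nat \<Rightarrow> nat \<Rightarrow> rmat \<Rightarrow> rmat" where
  "svdV N1 N2 r L = (SOME V. \<exists>U s. compact_svd N1 N2 r L U s V)"

definition mu_v :: "nat \<Rightarrow> nat \<Rightarrow> nat \<Rightarrow> rmat \<Rightarrow> real" where
  "mu_v N1 N2 r L = Inf {\<mu>. \<forall>i<N2. (\<Sum>j<r. (svdV N1 N2 r L (i,j))^2) \<le> \<mu> * real r / real N2}"

end

theory Submission
  imports Defs
begin

text \<open>Whenever L has rank r the event is empty. Write L = U Sigma V^T with
  orthonormal columns of V. The columns of L in cluster i factor through the d = r/n rows of Q_i,
  so the corresponding rows of V lie in a space of dimension at most d and, by Bessel's inequality,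
  carry total squared norm at most d. Since the squared norms of all rows of V add up to r = n d,
  every cluster carries exactly d, and in the smallest cluster some row has squared norm at least
  d / min n_i; hence mu_v >= N2 / (n min n_i), twice the threshold. For r = 0, mu_v is a junk value,
  but then the logarithmic hypothesis forces all n_i = 1 and the right-hand side is at least 2.

  A compact SVD with exactly rank L terms is constructed directly: a maximiser of |L x| on the unit
  sphere yields a singular pair, deflation repeats this until the residual vanishes, and the number
  of pairs found equals the column rank.\<close>

section \<open>Inner products on R^N\<close>

definition dot :: "nat \<Rightarrow> (nat \<Rightarrow> real) \<Rightarrow> (nat \<Rightarrow> real) \<Rightarrow> real" where
  "dot N x y = (\<Sum>i<N. x i * y i)"

definition matvec :: "nat \<Rightarrow> rmat \<Rightarrow> (nat \<Rightarrow> real) \<Rightarrow> (nat \<Rightarrow> real)" where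
  "matvec N R x = (\<lambda>a. \<Sum>b<N. R (a,b) * x b)"

definition matvec_T :: "nat \<Rightarrow> rmat \<Rightarrow> (nat \<Rightarrow> real) \<Rightarrow> (nat \<Rightarrow> real)" where
  "matvec_T N R y = (\<lambda>b. \<Sum>a<N. R (a,b) * y a)"

definition unit_vec :: "nat \<Rightarrow> nat \<Rightarrow> real" where
  "unit_vec b = (\<lambda>i. of_bool (i = b))"

lemma dot_commute: "dot N x y = dot N y x"
  unfolding dot_def by (simp add: mult.commute)

lemma dot_cong:
  "(\<And>i. i < N \<Longrightarrow> x i = x' i) \<Longrightarrow> (\<And>i. i < N \<Longrightarrow> y i = y' i) \<Longrightarrow> dot N x y = dot N x' y'"
  unfolding dot_def by (intro sum.cong) auto

lemma dot_scale: "dot N (\<lambda>i. c * x i) (\<lambda>i. d * y i) = c * d * dot N x y"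
  unfolding dot_def by (simp add: sum_distrib_left algebra_simps)

lemma dot_scale_left: "dot N (\<lambda>i. c * x i) y = c * dot N x y"
  using dot_scale[of N c x 1 y] by simp

lemma dot_add_scale_self:
  "dot N (\<lambda>i. x i + t * y i) (\<lambda>i. x i + t * y i) = dot N x x + 2 * t * dot N x y + t\<^sup>2 * dot N y y"
  unfolding dot_def
  by (simp add: sum.distrib sum_distrib_left algebra_simps power2_eq_square)

lemma dot_self_nonneg: "dot N x x \<ge> 0"
  unfolding dot_def by (intro sum_nonneg) auto

lemma dot_self_eq_0: "dot N x x = 0 \<Longrightarrow> i < N \<Longrightarrow> x i = 0"
  unfolding dot_def by (subst (asm) sum_nonneg_eq_0_iff) auto

lemma sq_le_dot_self: "i < N \<Longrightarrow> (x i)\<^sup>2 \<le> dot N x x"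
  unfolding dot_def power2_eq_square by (rule member_le_sum[where f = "\<lambda>i. x i * x i"]) auto

lemma dot_unit_vec: "b < N \<Longrightarrow> dot N (unit_vec b) x = x b"
  unfolding dot_def unit_vec_def by simp

lemma matvec_unit_vec: "b < N \<Longrightarrow> matvec N R (unit_vec b) a = R (a,b)"
  unfolding matvec_def unit_vec_def by (simp add: mult.commute)

lemma matvec_add_scale: "matvec N R (\<lambda>b. x b + t * y b) = (\<lambda>a. matvec N R x a + t * matvec N R y a)"
  unfolding matvec_def by (auto simp: sum.distrib sum_distrib_left algebra_simps)

lemma matvec_scale: "matvec N R (\<lambda>b. c * x b) = (\<lambda>a. c * matvec N R x a)"
  unfolding matvec_def by (auto simp: sum_distrib_left algebra_simps)

lemma dot_matvec_T: "dot N2 (matvec_T N1 R y) x = dot N1 y (matvec N2 R x)"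
  unfolding dot_def matvec_T_def matvec_def sum_distrib_right sum_distrib_left
  by (subst sum.swap) (simp add: mult_ac)

lemma dot_sum_left:
  assumes "\<And>i. i < N \<Longrightarrow> x i = (\<Sum>t\<in>T. c t * X t i)"
  shows "dot N x y = (\<Sum>t\<in>T. c t * dot N (X t) y)"
proof -
  have "dot N x y = (\<Sum>i<N. (\<Sum>t\<in>T. c t * X t i) * y i)"
    unfolding dot_def using assms by (intro sum.cong) auto
  also have "\<dots> = (\<Sum>t\<in>T. c t * dot N (X t) y)"
    unfolding dot_def sum_distrib_right sum_distrib_left by (subst sum.swap) (simp add: mult_ac)
  finally show ?thesis .
qed

section \<open>Orthonormal families, spans and Gram--Schmidt\<close>

definition orthonormal :: "nat \<Rightarrow> (nat \<Rightarrow> nat \<Rightarrow> real) \<Rightarrow> nat set \<Rightarrow> bool" where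
  "orthonormal N E S \<longleftrightarrow> (\<forall>s\<in>S. \<forall>t\<in>S. dot N (E s) (E t) = (if s = t then 1 else 0))"

definition in_span :: "nat \<Rightarrow> (nat \<Rightarrow> nat \<Rightarrow> real) \<Rightarrow> nat set \<Rightarrow> (nat \<Rightarrow> real) \<Rightarrow> bool" where
  "in_span N X T x \<longleftrightarrow> (\<exists>c. \<forall>i<N. x i = (\<Sum>t\<in>T. c t * X t i))"

definition lin_independent :: "nat \<Rightarrow> (nat \<Rightarrow> nat \<Rightarrow> real) \<Rightarrow> nat set \<Rightarrow> bool" where
  "lin_independent N X T \<longleftrightarrow> (\<forall>c. (\<forall>i<N. (\<Sum>t\<in>T. c t * X t i) = 0) \<longrightarrow> (\<forall>t\<in>T. c t = 0))"

lemma orthonormal_sum_delta: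
  assumes "orthonormal N E S" "finite S" "t \<in> S"
  shows "(\<Sum>s\<in>S. c s * dot N (E s) (E t)) = c t"
proof -
  have "(\<Sum>s\<in>S. c s * dot N (E s) (E t)) = (\<Sum>s\<in>S. if s = t then c t else 0)"
    using assms unfolding orthonormal_def by (intro sum.cong) auto
  then show ?thesis using assms by simp
qed

lemma orthonormal_insert:
  assumes "orthonormal N E S" "dot N e e = 1" "\<forall>s\<in>S. dot N e (E s) = 0" "x \<notin> S"
  shows "orthonormal N (E(x := e)) (insert x S)"
  using assms unfolding orthonormal_def by (auto simp: dot_commute)

lemma parseval:
  assumes E: "orthonormal N E S" "finite S"
    and x: "\<And>i. i < N \<Longrightarrow> x i = (\<Sum>s\<in>S. c s * E s i)"
  shows "\<And>t. t \<in> S \<Longrightarrow> dot N x (E t) = c t" and "dot N x x = (\<Sum>s\<in>S. (c s)\<^sup>2)"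
proof -
  show coeff: "dot N x (E t) = c t" if "t \<in> S" for t
    using dot_sum_left[OF x] orthonormal_sum_delta[OF E that] by simp
  have "dot N x x = (\<Sum>s\<in>S. c s * dot N (E s) x)"
    by (rule dot_sum_left[OF x])
  also have "\<dots> = (\<Sum>s\<in>S. (c s)\<^sup>2)"
    by (intro sum.cong) (simp_all add: dot_commute[of N _ x] coeff power2_eq_square)
  finally show "dot N x x = (\<Sum>s\<in>S. (c s)\<^sup>2)" .
qed

lemma bessel:
  assumes E: "orthonormal N E S" "finite S"
  shows "(\<Sum>s\<in>S. (dot N x (E s))\<^sup>2) \<le> dot N x x"
proof -
  define y where "y i = (\<Sum>s\<in>S. dot N x (E s) * E s i)" for i
  have yy: "dot N y y = (\<Sum>s\<in>S. (dot N x (E s))\<^sup>2)"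
    by (rule parseval(2)[OF E]) (simp add: y_def)
  have "dot N y x = (\<Sum>s\<in>S. (dot N x (E s))\<^sup>2)"
    by (subst dot_sum_left[where c = "\<lambda>s. dot N x (E s)"]) (simp_all add: y_def dot_commute power2_eq_square)
  then have xy: "dot N x y = (\<Sum>s\<in>S. (dot N x (E s))\<^sup>2)" by (simp add: dot_commute)
  have "0 \<le> dot N (\<lambda>i. x i + (-1) * y i) (\<lambda>i. x i + (-1) * y i)" by (rule dot_self_nonneg)
  then show ?thesis unfolding dot_add_scale_self xy yy by simp
qed

lemma orthonormal_card_le:
  assumes E: "orthonormal N E S" "finite S" and F: "orthonormal N F T" "finite T"
    and span: "\<forall>s\<in>S. in_span N F T (E s)"
  shows "card S \<le> card T"
proof -
  have "real (card S) = (\<Sum>s\<in>S. dot N (E s) (E s))"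
    using E unfolding orthonormal_def by simp
  also have "\<dots> = (\<Sum>s\<in>S. \<Sum>t\<in>T. (dot N (E s) (F t))\<^sup>2)"
  proof (intro sum.cong refl)
    fix s assume "s \<in> S"
    then obtain c where c: "\<forall>i<N. E s i = (\<Sum>t\<in>T. c t * F t i)"
      using span unfolding in_span_def by blast
    show "dot N (E s) (E s) = (\<Sum>t\<in>T. (dot N (E s) (F t))\<^sup>2)"
      using parseval[OF F, of "E s" c] c by simp
  qed
  also have "\<dots> = (\<Sum>t\<in>T. \<Sum>s\<in>S. (dot N (F t) (E s))\<^sup>2)"
    by (subst sum.swap) (simp add: dot_commute)
  also have "\<dots> \<le> (\<Sum>t\<in>T. dot N (F t) (F t))"
    by (intro sum_mono bessel[OF E])
  also have "\<dots> = real (card T)"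
    using F unfolding orthonormal_def by simp
  finally show ?thesis by simp
qed

lemma in_span_sum: "in_span N X T (\<lambda>i. \<Sum>t\<in>T. c t * X t i)"
  unfolding in_span_def by (intro exI[of _ c]) simp

lemma in_span_member: "finite T \<Longrightarrow> t \<in> T \<Longrightarrow> in_span N X T (X t)"
  unfolding in_span_def
  by (intro exI[of _ "\<lambda>s. of_bool (s = t)"]) simp

lemma in_span_unit_vec: "in_span N unit_vec {..<N} x"
  unfolding in_span_def
  by (intro exI[of _ x]) (simp add: unit_vec_def mult.commute)

lemma in_span_mono: "in_span N X T x \<Longrightarrow> T \<subseteq> T' \<Longrightarrow> finite T' \<Longrightarrow> in_span N X T' x"
  unfolding in_span_def
proof (elim exE)
  fix c assume "T \<subseteq> T'" "finite T'" and c: "\<forall>i<N. x i = (\<Sum>t\<in>T. c t * X t i)"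
  then have "\<forall>i<N. x i = (\<Sum>t\<in>T'. (of_bool (t \<in> T) * c t) * X t i)"
    by (simp add: mult.assoc Int_absorb1)
  then show "\<exists>c. \<forall>i<N. x i = (\<Sum>t\<in>T'. c t * X t i)"
    by (intro exI[of _ "\<lambda>t. of_bool (t \<in> T) * c t"])
qed

lemma in_span_cong:
  "in_span N X T x \<Longrightarrow> (\<And>t. t \<in> T \<Longrightarrow> X t = Y t) \<Longrightarrow> in_span N Y T x"
  unfolding in_span_def by (metis (no_types, lifting) sum.cong)

lemma in_span_trans:
  assumes "\<forall>s\<in>S. in_span N X T (E s)" and "in_span N E S x"
  shows "in_span N X T x"
proof -
  obtain b where b: "\<forall>s\<in>S. \<forall>i<N. E s i = (\<Sum>t\<in>T. b s t * X t i)"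
    using bchoice[OF assms(1)[unfolded in_span_def]] by blast
  obtain c where c: "\<forall>i<N. x i = (\<Sum>s\<in>S. c s * E s i)"
    using assms(2) unfolding in_span_def by blast
  have "x i = (\<Sum>t\<in>T. (\<Sum>s\<in>S. c s * b s t) * X t i)" if "i < N" for i
  proof -
    have "x i = (\<Sum>s\<in>S. c s * (\<Sum>t\<in>T. b s t * X t i))"
      using b c that by (auto intro: sum.cong)
    then show ?thesis
      unfolding sum_distrib_left sum_distrib_right by (subst (asm) sum.swap) (simp add: mult_ac)
  qed
  then show ?thesis unfolding in_span_def by (intro exI[of _ "\<lambda>t. \<Sum>s\<in>S. c s * b s t"]) blast
qed

lemma in_span_lincomb:
  assumes "in_span N X T x" "in_span N X T y"
  shows "in_span N X T (\<lambda>i. \<alpha> * x i + \<beta> * y i)"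
proof -
  obtain c d where "\<forall>i<N. x i = (\<Sum>t\<in>T. c t * X t i)" "\<forall>i<N. y i = (\<Sum>t\<in>T. d t * X t i)"
    using assms unfolding in_span_def by blast
  then have "\<forall>i<N. \<alpha> * x i + \<beta> * y i = (\<Sum>t\<in>T. (\<alpha> * c t + \<beta> * d t) * X t i)"
    by (simp add: sum.distrib sum_distrib_left algebra_simps)
  then show ?thesis unfolding in_span_def by (intro exI[of _ "\<lambda>t. \<alpha> * c t + \<beta> * d t"])
qed

lemma in_span_diff_sum:
  fixes E :: "nat \<Rightarrow> nat \<Rightarrow> real"
  assumes "\<forall>s\<in>S. in_span N X T (E s)" "finite T" "t \<in> T"
  shows "in_span N X T (\<lambda>i. X t i - (\<Sum>s\<in>S. c s * E s i))"
proof -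
  have "in_span N X T (\<lambda>i. 1 * X t i + (-1) * (\<Sum>s\<in>S. c s * E s i))"
    using in_span_member[OF assms(2,3)] in_span_trans[OF assms(1) in_span_sum]
    by (rule in_span_lincomb)
  then show ?thesis
    by simp
qed

lemma lin_independent_subset:
  assumes "lin_independent N X T'" "T \<subseteq> T'" "finite T'"
  shows "lin_independent N X T"
  unfolding lin_independent_def
proof (intro allI impI)
  fix c assume "\<forall>i<N. (\<Sum>t\<in>T. c t * X t i) = 0"
  then have "\<forall>i<N. (\<Sum>t\<in>T'. (of_bool (t \<in> T) * c t) * X t i) = 0"
    using assms(2,3) by (simp add: mult.assoc Int_absorb1)
  then have "\<forall>t\<in>T'. of_bool (t \<in> T) * c t = 0"
    using assms(1)[unfolded lin_independent_def, THEN spec, of "\<lambda>t. of_bool (t \<in> T) * c t"]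
    by blast
  then show "\<forall>t\<in>T. c t = 0" using assms(2) by force
qed

lemma in_span_not_lin_independent:
  assumes "finite T" "x \<notin> T" "in_span N X T (X x)"
  shows "\<not> lin_independent N X (insert x T)"
proof
  obtain d where d: "\<forall>i<N. X x i = (\<Sum>t\<in>T. d t * X t i)"
    using assms(3) unfolding in_span_def by blast
  have "(\<Sum>t\<in>T. (d(x := -1)) t * X t i) = (\<Sum>t\<in>T. d t * X t i)" for i
    using assms(2) by (intro sum.cong) auto
  then have zero: "\<forall>i<N. (\<Sum>t\<in>insert x T. (d(x := -1)) t * X t i) = 0"
    using assms(1,2) d by simp
  assume "lin_independent N X (insert x T)"
  then have "(\<forall>i<N. (\<Sum>t\<in>insert x T. (d(x := -1)) t * X t i) = 0)
      \<longrightarrow> (\<forall>t\<in>insert x T. (d(x := -1)) t = 0)"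
    unfolding lin_independent_def by (rule spec)
  with zero show False by simp
qed

lemma orthonormal_projection_residual:
  assumes E: "orthonormal N E S" "finite S" and "s \<in> S"
  shows "dot N (\<lambda>i. y i - (\<Sum>t\<in>S. dot N y (E t) * E t i)) (E s) = 0"
proof -
  have "dot N (\<lambda>i. \<Sum>t\<in>S. dot N y (E t) * E t i) (E s)
      = (\<Sum>t\<in>S. dot N y (E t) * dot N (E t) (E s))"
    by (rule dot_sum_left) simp
  then have "dot N (\<lambda>i. \<Sum>t\<in>S. dot N y (E t) * E t i) (E s) = dot N y (E s)"
    using orthonormal_sum_delta[OF E \<open>s \<in> S\<close>] by simp
  then show ?thesis
    unfolding dot_def by (simp add: left_diff_distrib sum_subtractf)
qed

lemma gram_schmidt_step:
  fixes y :: "nat \<Rightarrow> real"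
  assumes E: "orthonormal N E S" "finite S" "x \<notin> S"
  defines "\<rho> \<equiv> (\<lambda>i. y i - (\<Sum>s\<in>S. dot N y (E s) * E s i))"
  assumes "dot N \<rho> \<rho> \<noteq> 0"
  shows "orthonormal N (E(x := (\<lambda>i. (1 / sqrt (dot N \<rho> \<rho>)) * \<rho> i))) (insert x S)"
    and "in_span N (E(x := (\<lambda>i. (1 / sqrt (dot N \<rho> \<rho>)) * \<rho> i))) (insert x S) y"
proof -
  define \<nu> where "\<nu> = sqrt (dot N \<rho> \<rho>)"
  have "\<nu> > 0"
    using assms(5) dot_self_nonneg[of N \<rho>] unfolding \<nu>_def by simp
  have "\<forall>s\<in>S. dot N \<rho> (E s) = 0"
    unfolding \<rho>_def using orthonormal_projection_residual[OF E(1,2)] by blast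
  then have "\<forall>s\<in>S. dot N (\<lambda>i. (1 / \<nu>) * \<rho> i) (E s) = 0"
    unfolding dot_scale_left by simp
  moreover have "dot N (\<lambda>i. (1 / \<nu>) * \<rho> i) (\<lambda>i. (1 / \<nu>) * \<rho> i) = 1"
    unfolding dot_scale \<nu>_def using assms(5) dot_self_nonneg[of N \<rho>] by simp
  ultimately show "orthonormal N (E(x := (\<lambda>i. (1 / sqrt (dot N \<rho> \<rho>)) * \<rho> i))) (insert x S)"
    unfolding \<nu>_def by (intro orthonormal_insert[OF E(1) _ _ E(3)])
  let ?c = "(\<lambda>s. dot N y (E s))(x := \<nu>)"
  have "y i = (\<Sum>s\<in>insert x S. ?c s * (E(x := (\<lambda>i. (1 / \<nu>) * \<rho> i))) s i)" for i
  proof -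
    have "(\<Sum>s\<in>S. ?c s * (E(x := (\<lambda>i. (1 / \<nu>) * \<rho> i))) s i) = (\<Sum>s\<in>S. dot N y (E s) * E s i)"
      using E(3) by (intro sum.cong) auto
    then show ?thesis
      using E(2,3) \<open>\<nu> > 0\<close> by (simp add: \<rho>_def)
  qed
  then show "in_span N (E(x := (\<lambda>i. (1 / sqrt (dot N \<rho> \<rho>)) * \<rho> i))) (insert x S) y"
    unfolding in_span_def \<nu>_def[symmetric] by (intro exI[of _ ?c]) blast
qed

lemma gram_schmidt:
  assumes "finite T"
  shows "\<exists>E S. S \<subseteq> T \<and> orthonormal N E S \<and> (\<forall>t\<in>T. in_span N E S (X t)) \<and>
    (\<forall>s\<in>S. in_span N X T (E s)) \<and> (lin_independent N X T \<longrightarrow> S = T)"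
  using assms
proof (induction T rule: finite_induct)
  case empty
  show ?case by (intro exI[of _ X] exI[of _ "{}"]) (simp add: orthonormal_def)
next
  case (insert x T)
  obtain E S where S: "S \<subseteq> T" and E: "orthonormal N E S"
    and span_X: "\<forall>t\<in>T. in_span N E S (X t)" and span_E: "\<forall>s\<in>S. in_span N X T (E s)"
    and indep: "lin_independent N X T \<longrightarrow> S = T"
    using insert.IH by blast
  have fin: "finite S" "finite (insert x T)" and "x \<notin> S"
    using S insert.hyps finite_subset by auto
  have span_E': "\<forall>s\<in>S. in_span N X (insert x T) (E s)"
    using span_E in_span_mono[OF _ _ fin(2)] by blast
  have indep': "lin_independent N X (insert x T) \<longrightarrow> S = T"
    using indep lin_independent_subset[OF _ _ fin(2)] by blast
  define c where "c s = dot N (X x) (E s)" for s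
  define \<rho> where "\<rho> = (\<lambda>i. X x i - (\<Sum>s\<in>S. c s * E s i))"
  show ?case
  proof (cases "dot N \<rho> \<rho> = 0")
    case True
    then have "\<forall>i<N. X x i = (\<Sum>s\<in>S. c s * E s i)"
      using dot_self_eq_0 unfolding \<rho>_def by fastforce
    then have x_span: "in_span N E S (X x)"
      unfolding in_span_def by blast
    have "\<not> lin_independent N X (insert x T)"
      using in_span_not_lin_independent[OF insert.hyps(1,2)] in_span_trans[OF span_E x_span] by blast
    then show ?thesis
      using S E span_X x_span span_E' by (intro exI[of _ E] exI[of _ S]) auto
  next
    case False
    define E' where "E' = E(x := (\<lambda>i. (1 / sqrt (dot N \<rho> \<rho>)) * \<rho> i))"
    have E'_S: "\<forall>s\<in>S. E' s = E s"
      using \<open>x \<notin> S\<close> unfolding E'_def by auto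
    have step: "orthonormal N E' (insert x S)" "in_span N E' (insert x S) (X x)"
      using gram_schmidt_step[OF E fin(1) \<open>x \<notin> S\<close>, of "X x"] False
      unfolding E'_def \<rho>_def c_def by simp_all
    have "in_span N E' (insert x S) (X t)" if "t \<in> T" for t
      using span_X that E'_S in_span_cong in_span_mono fin(1) by (metis finite_insert subset_insertI)
    moreover have "in_span N X (insert x T) \<rho>"
      unfolding \<rho>_def using span_E' fin(2) by (rule in_span_diff_sum) simp
    then have "in_span N X (insert x T) (E' x)"
      using in_span_lincomb[of N X "insert x T" \<rho> \<rho> "1 / sqrt (dot N \<rho> \<rho>)" 0] unfolding E'_def by simp
    ultimately show ?thesis
      using S step span_E' E'_S indep' by (intro exI[of _ E'] exI[of _ "insert x S"]) auto
  qed
qed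

lemma card_orthonormal_le_span:
  assumes "orthonormal N E S" "finite S" "finite T" "\<forall>s\<in>S. in_span N X T (E s)"
  shows "card S \<le> card T"
proof -
  obtain F S' where S': "S' \<subseteq> T" "orthonormal N F S'" "\<forall>t\<in>T. in_span N F S' (X t)"
    using gram_schmidt[OF assms(3)] by blast
  have "card S \<le> card S'"
    using S' assms in_span_trans finite_subset
    by (intro orthonormal_card_le[OF assms(1,2) S'(2)]) blast+
  also have "card S' \<le> card T"
    using S'(1) assms(3) by (rule card_mono[rotated])
  finally show ?thesis .
qed

lemma card_lin_independent_le_span:
  assumes "lin_independent N X J" "finite J" "finite T" "\<forall>j\<in>J. in_span N Y T (X j)"
  shows "card J \<le> card T"
proof -
  obtain E where "orthonormal N E J" "\<forall>j\<in>J. in_span N X J (E j)"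
    using gram_schmidt[OF assms(2), of N X] assms(1) by blast
  then show ?thesis
    using assms in_span_trans by (intro card_orthonormal_le_span) blast+
qed

section \<open>Singular pairs and the compact SVD\<close>

definition image_sqnorm :: "nat \<Rightarrow> nat \<Rightarrow> rmat \<Rightarrow> (nat \<Rightarrow> real) \<Rightarrow> real" where
  "image_sqnorm N1 N2 R x = dot N1 (matvec N2 R x) (matvec N2 R x)"

lemma compactin_unit_sphere:
  "compactin (product_topology (\<lambda>_. euclideanreal) {..<N})
    {x \<in> topspace (product_topology (\<lambda>_. euclideanreal) {..<N}). dot N x x \<in> {1}}"
    (is "compactin ?X ?C")
proof -
  have "continuous_map ?X euclideanreal (\<lambda>x. dot N x x)"
    unfolding dot_def
    by (intro continuous_map_sum continuous_map_real_mult continuous_map_product_coordinates) auto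
  then have "closedin ?X ?C"
    by (rule closedin_continuous_map_preimage) auto
  moreover have "?C \<subseteq> PiE {..<N} (\<lambda>_. {-1..1})"
  proof
    fix x assume "x \<in> ?C"
    then have "dot N x x = 1" "x \<in> extensional {..<N}"
      by (auto simp: PiE_def)
    moreover have "\<bar>x i\<bar> \<le> 1" if "i < N" for i
      using sq_le_dot_self[OF that, of x] \<open>dot N x x = 1\<close> by (simp add: abs_square_le_1)
    ultimately show "x \<in> PiE {..<N} (\<lambda>_. {-1..1})"
      by (auto simp: PiE_def abs_le_iff)
  qed
  moreover have "compactin ?X (PiE {..<N} (\<lambda>_. {-1..1::real}))"
    by (subst compactin_PiE) auto
  ultimately show ?thesis
    using closed_compactin by blast
qed

lemma image_sqnorm_attains_max:
  assumes "N2 > 0"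
  shows "\<exists>w. dot N2 w w = 1 \<and>
    (\<forall>x. dot N2 x x = 1 \<longrightarrow> image_sqnorm N1 N2 R x \<le> image_sqnorm N1 N2 R w)"
proof -
  let ?X = "product_topology (\<lambda>_. euclideanreal) {..<N2}"
  define C where "C = {x \<in> topspace ?X. dot N2 x x \<in> {1}}"
  have "continuous_map ?X euclideanreal (image_sqnorm N1 N2 R)"
    unfolding image_sqnorm_def dot_def matvec_def
    by (intro continuous_map_sum continuous_map_real_mult continuous_map_real_mult_left
        continuous_map_product_coordinates) auto
  then have cpt: "compact (image_sqnorm N1 N2 R ` C)"
    using image_compactin[OF compactin_unit_sphere] compactin_euclidean_iff unfolding C_def by blast
  have "dot N2 (restrict (unit_vec 0) {..<N2}) (restrict (unit_vec 0) {..<N2})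
      = dot N2 (unit_vec 0) (unit_vec 0)"
    by (rule dot_cong) auto
  also have "\<dots> = 1"
    using dot_unit_vec[OF assms] by (simp add: unit_vec_def)
  finally have "restrict (unit_vec 0) {..<N2} \<in> C"
    unfolding C_def by simp
  then have "image_sqnorm N1 N2 R ` C \<noteq> {}" by blast
  then obtain w where w: "w \<in> C" "\<forall>y\<in>C. image_sqnorm N1 N2 R y \<le> image_sqnorm N1 N2 R w"
    using compact_attains_sup[OF cpt] by blast
  have "image_sqnorm N1 N2 R x \<le> image_sqnorm N1 N2 R w" if "dot N2 x x = 1" for x
  proof -
    have "dot N2 (restrict x {..<N2}) (restrict x {..<N2}) = dot N2 x x"
      by (rule dot_cong) auto
    then have "restrict x {..<N2} \<in> C"
      using that unfolding C_def by simp
    then have "image_sqnorm N1 N2 R (restrict x {..<N2}) \<le> image_sqnorm N1 N2 R w"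
      using w(2) by blast
    moreover have "matvec N2 R (restrict x {..<N2}) = matvec N2 R x"
      unfolding matvec_def by auto
    ultimately show ?thesis
      unfolding image_sqnorm_def by simp
  qed
  then show ?thesis
    using w(1) unfolding C_def by auto
qed

lemma image_sqnorm_le_of_max_on_sphere:
  assumes max: "\<forall>y. dot N2 y y = 1 \<longrightarrow> image_sqnorm N1 N2 R y \<le> m"
  shows "image_sqnorm N1 N2 R x \<le> m * dot N2 x x"
proof (cases "dot N2 x x = 0")
  case True
  then have "matvec N2 R x = (\<lambda>a. 0)"
    unfolding matvec_def by (auto intro!: sum.neutral simp: dot_self_eq_0[OF True])
  then show ?thesis
    using True unfolding image_sqnorm_def dot_def by simp
next
  case False
  then have pos: "dot N2 x x > 0"
    using dot_self_nonneg[of N2 x] by simp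
  define c where "c = 1 / sqrt (dot N2 x x)"
  have c: "c * c * dot N2 x x = 1"
    unfolding c_def using pos by simp
  then have "image_sqnorm N1 N2 R (\<lambda>i. c * x i) \<le> m"
    using max by (simp add: dot_scale)
  then have "c * c * image_sqnorm N1 N2 R x \<le> m"
    unfolding image_sqnorm_def matvec_scale dot_scale .

  have "image_sqnorm N1 N2 R x = (c * c * dot N2 x x) * image_sqnorm N1 N2 R x"
    using c by simp
  also have "\<dots> = dot N2 x x * (c * c * image_sqnorm N1 N2 R x)"
    by (simp only: mult_ac)
  also have "\<dots> \<le> dot N2 x x * m"
    using pos \<open>c * c * image_sqnorm N1 N2 R x \<le> m\<close> by (simp add: mult_left_mono)
  finally show ?thesis
    by (simp add: mult.commute)
qed

lemma linear_le_quadratic_imp_zero: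
  fixes P K :: real
  assumes "\<And>t. 2 * t * P \<le> t\<^sup>2 * K"
  shows "P = 0"
proof (rule ccontr)
  assume "P \<noteq> 0"
  define t where "t = P / (\<bar>K\<bar> + 1)"
  have tP: "t * P > 0"
    using \<open>P \<noteq> 0\<close> unfolding t_def by (simp add: power2_eq_square[symmetric] add_pos_nonneg)
  have "t\<^sup>2 * \<bar>K\<bar> = (t * P) * (\<bar>K\<bar> / (\<bar>K\<bar> + 1))"
    unfolding t_def by (simp add: power2_eq_square)
  also have "\<dots> < t * P"
    using tP mult_strict_left_mono[of "\<bar>K\<bar> / (\<bar>K\<bar> + 1)" 1 "t * P"] by simp
  finally have "t\<^sup>2 * \<bar>K\<bar> < t * P" .
  moreover have "2 * t * P \<le> t\<^sup>2 * K" by (rule assms)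
  moreover have "t\<^sup>2 * K \<le> t\<^sup>2 * \<bar>K\<bar>" by (simp add: mult_left_mono)
  ultimately show False using tP by linarith
qed

lemma matvec_dot_of_max:
  assumes le: "\<forall>x. image_sqnorm N1 N2 R x \<le> m * dot N2 x x"
    and eq: "image_sqnorm N1 N2 R w = m * dot N2 w w"
  shows "dot N1 (matvec N2 R w) (matvec N2 R h) = m * dot N2 w h"
proof -
  let ?P = "dot N1 (matvec N2 R w) (matvec N2 R h) - m * dot N2 w h"
  have "2 * t * ?P \<le> t\<^sup>2 * (m * dot N2 h h - image_sqnorm N1 N2 R h)" for t
  proof -
    have "image_sqnorm N1 N2 R (\<lambda>i. w i + t * h i) \<le> m * dot N2 (\<lambda>i. w i + t * h i) (\<lambda>i. w i + t * h i)"
      using le by blast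
    then show ?thesis
      unfolding image_sqnorm_def matvec_add_scale dot_add_scale_self
      using eq unfolding image_sqnorm_def by (simp add: algebra_simps)
  qed
  then show ?thesis
    using linear_le_quadratic_imp_zero by fastforce
qed

lemma singular_pair_of_max:
  assumes le: "\<forall>x. image_sqnorm N1 N2 R x \<le> \<sigma>\<^sup>2 * dot N2 x x"
    and w: "dot N2 w w = 1" "image_sqnorm N1 N2 R w = \<sigma>\<^sup>2" and "\<sigma> > 0"
  shows "\<exists>u. dot N1 u u = 1 \<and> (\<forall>a. matvec N2 R w a = \<sigma> * u a) \<and>
    (\<forall>b<N2. matvec_T N1 R u b = \<sigma> * w b)"
proof -
  define u where "u = (\<lambda>a. (1 / \<sigma>) * matvec N2 R w a)"
  have "dot N1 u u = (1 / \<sigma>) * (1 / \<sigma>) * \<sigma>\<^sup>2"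
    unfolding u_def dot_scale w(2)[symmetric] image_sqnorm_def ..
  then have "dot N1 u u = 1"
    using \<open>\<sigma> > 0\<close> by (simp add: power2_eq_square)
  moreover have "matvec N2 R w a = \<sigma> * u a" for a
    unfolding u_def using \<open>\<sigma> > 0\<close> by simp
  moreover have "matvec_T N1 R u b = \<sigma> * w b" if "b < N2" for b
  proof -
    have eq: "image_sqnorm N1 N2 R w = \<sigma>\<^sup>2 * dot N2 w w"
      using w by simp
    have "matvec N2 R (unit_vec b) = (\<lambda>a. R (a,b))"
      using matvec_unit_vec[OF that] by auto
    then have "matvec_T N1 R u b = (1 / \<sigma>) * dot N1 (matvec N2 R w) (matvec N2 R (unit_vec b))"
      unfolding matvec_T_def u_def dot_def by (simp add: sum_distrib_left mult.commute mult.left_commute)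
    also have "\<dots> = (1 / \<sigma>) * (\<sigma>\<^sup>2 * w b)"
      unfolding matvec_dot_of_max[OF le eq] dot_commute[of N2 w] dot_unit_vec[OF that] ..
    also have "\<dots> = \<sigma> * w b"
      using \<open>\<sigma> > 0\<close> by (simp add: power2_eq_square)
    finally show ?thesis .
  qed
  ultimately show ?thesis
    by blast
qed

lemma exists_singular_pair:
  assumes "a0 < N1" "b0 < N2" "R (a0,b0) \<noteq> 0"
  shows "\<exists>\<sigma> w u. \<sigma> > 0 \<and> dot N2 w w = 1 \<and> dot N1 u u = 1 \<and>
    (\<forall>a. matvec N2 R w a = \<sigma> * u a) \<and> (\<forall>b<N2. matvec_T N1 R u b = \<sigma> * w b)"
proof -
  obtain w where w: "dot N2 w w = 1"
    and max: "\<forall>x. dot N2 x x = 1 \<longrightarrow> image_sqnorm N1 N2 R x \<le> image_sqnorm N1 N2 R w"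
    using image_sqnorm_attains_max[of N2 N1 R] \<open>b0 < N2\<close> by auto
  define m where "m = image_sqnorm N1 N2 R w"
  have le: "\<forall>x. image_sqnorm N1 N2 R x \<le> m * dot N2 x x"
    unfolding m_def using image_sqnorm_le_of_max_on_sphere[OF max] by blast
  have "matvec N2 R (unit_vec b0) = (\<lambda>a. R (a,b0))"
    using matvec_unit_vec[OF \<open>b0 < N2\<close>] by auto
  then have "(R (a0,b0))\<^sup>2 \<le> image_sqnorm N1 N2 R (unit_vec b0)"
    unfolding image_sqnorm_def using sq_le_dot_self[OF \<open>a0 < N1\<close>] by simp
  also have "\<dots> \<le> m"
    using le[rule_format, of "unit_vec b0"] dot_unit_vec[OF \<open>b0 < N2\<close>, of "unit_vec b0"]
    by (simp add: unit_vec_def)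
  finally have "m > 0"
    using assms(3) by (smt (verit) zero_less_power2)
  then have "(sqrt m)\<^sup>2 = m" "sqrt m > 0"
    by simp_all
  then obtain u where "dot N1 u u = 1" "\<forall>a. matvec N2 R w a = sqrt m * u a"
    "\<forall>b<N2. matvec_T N1 R u b = sqrt m * w b"
    using singular_pair_of_max[of N1 N2 R "sqrt m" w] le w unfolding m_def by auto
  then show ?thesis
    using w \<open>sqrt m > 0\<close> by blast
qed

definition partial_svd ::
    "nat \<Rightarrow> nat \<Rightarrow> rmat \<Rightarrow> nat \<Rightarrow> (nat \<Rightarrow> nat \<Rightarrow> real) \<Rightarrow> (nat \<Rightarrow> nat \<Rightarrow> real) \<Rightarrow> (nat \<Rightarrow> real) \<Rightarrow> bool" where
  "partial_svd N1 N2 L k u v \<sigma> \<longleftrightarrow>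
    orthonormal N1 u {..<k} \<and> orthonormal N2 v {..<k} \<and> (\<forall>t<k. \<sigma> t > 0) \<and>
    (\<forall>t<k. \<forall>a<N1. matvec N2 L (v t) a = \<sigma> t * u t a) \<and>
    (\<forall>t<k. \<forall>b<N2. matvec_T N1 L (u t) b = \<sigma> t * v t b)"

definition svd_residual :: "rmat \<Rightarrow> nat \<Rightarrow> (nat \<Rightarrow> nat \<Rightarrow> real) \<Rightarrow> (nat \<Rightarrow> nat \<Rightarrow> real) \<Rightarrow> (nat \<Rightarrow> real) \<Rightarrow> rmat" where
  "svd_residual L k u v \<sigma> = (\<lambda>(a,b). L (a,b) - (\<Sum>t<k. \<sigma> t * u t a * v t b))"

lemma matvec_svd_residual:
  "matvec N2 (svd_residual L k u v \<sigma>) x a = matvec N2 L x a - (\<Sum>t<k. \<sigma> t * u t a * dot N2 (v t) x)"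
proof -
  have "(\<Sum>b<N2. \<Sum>t<k. \<sigma> t * u t a * v t b * x b) = (\<Sum>t<k. \<sigma> t * u t a * dot N2 (v t) x)"
    unfolding dot_def sum_distrib_left by (subst sum.swap) (simp add: mult_ac)
  then show ?thesis
    unfolding matvec_def svd_residual_def
    by (simp add: left_diff_distrib sum_subtractf sum_distrib_right)
qed

lemma matvec_T_svd_residual:
  "matvec_T N1 (svd_residual L k u v \<sigma>) y b = matvec_T N1 L y b - (\<Sum>t<k. \<sigma> t * v t b * dot N1 (u t) y)"
proof -
  have "(\<Sum>a<N1. \<Sum>t<k. \<sigma> t * u t a * v t b * y a) = (\<Sum>t<k. \<sigma> t * v t b * dot N1 (u t) y)"
    unfolding dot_def sum_distrib_left by (subst sum.swap) (simp add: mult_ac)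
  then show ?thesis
    unfolding matvec_T_def svd_residual_def
    by (simp add: left_diff_distrib sum_subtractf sum_distrib_right)
qed

lemma svd_residual_annihilates:
  assumes d: "partial_svd N1 N2 L k u v \<sigma>" and "t < k"
  shows "a < N1 \<Longrightarrow> matvec N2 (svd_residual L k u v \<sigma>) (v t) a = 0"
    and "b < N2 \<Longrightarrow> matvec_T N1 (svd_residual L k u v \<sigma>) (u t) b = 0"
proof -
  have u: "orthonormal N1 u {..<k}" and v: "orthonormal N2 v {..<k}"
    using d unfolding partial_svd_def by blast+
  show "matvec N2 (svd_residual L k u v \<sigma>) (v t) a = 0" if "a < N1"
    using orthonormal_sum_delta[OF v _, of t "\<lambda>s. \<sigma> s * u s a"] d \<open>t < k\<close> that
    unfolding matvec_svd_residual partial_svd_def by simp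
  show "matvec_T N1 (svd_residual L k u v \<sigma>) (u t) b = 0" if "b < N2"
    using orthonormal_sum_delta[OF u _, of t "\<lambda>s. \<sigma> s * v s b"] d \<open>t < k\<close> that
    unfolding matvec_T_svd_residual partial_svd_def by simp
qed

lemma svd_residual_pair_orthogonal:
  assumes d: "partial_svd N1 N2 L k u v \<sigma>" and "s > 0" and "t < k"
    and Rw: "\<forall>a. matvec N2 (svd_residual L k u v \<sigma>) w a = s * u' a"
    and RTu: "\<forall>b<N2. matvec_T N1 (svd_residual L k u v \<sigma>) u' b = s * w b"
  shows "dot N2 w (v t) = 0" and "dot N1 u' (u t) = 0"
proof -
  let ?R = "svd_residual L k u v \<sigma>"
  have "dot N2 w (v t) = dot N2 (\<lambda>b. (1 / s) * matvec_T N1 ?R u' b) (v t)"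
    using RTu \<open>s > 0\<close> by (intro dot_cong) simp_all
  also have "\<dots> = (1 / s) * dot N1 u' (matvec N2 ?R (v t))"
    unfolding dot_scale_left dot_matvec_T ..
  also have "dot N1 u' (matvec N2 ?R (v t)) = dot N1 u' (\<lambda>_. 0)"
    by (rule dot_cong) (simp_all add: svd_residual_annihilates(1)[OF d \<open>t < k\<close>])
  finally show "dot N2 w (v t) = 0"
    by (simp add: dot_def)
  have "dot N1 u' (u t) = dot N1 (\<lambda>a. (1 / s) * matvec N2 ?R w a) (u t)"
    using Rw \<open>s > 0\<close> by (intro dot_cong) simp_all
  also have "\<dots> = (1 / s) * dot N2 (matvec_T N1 ?R (u t)) w"
    unfolding dot_scale_left dot_matvec_T dot_commute[of N1 _ "u t"] ..
  also have "dot N2 (matvec_T N1 ?R (u t)) w = dot N2 (\<lambda>_. 0) w"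
    by (rule dot_cong) (simp_all add: svd_residual_annihilates(2)[OF d \<open>t < k\<close>])
  finally show "dot N1 u' (u t) = 0"
    by (simp add: dot_def)
qed

text \<open>Being orthogonal to the pairs already found, a singular pair of the residual is a singular
  pair of L itself.\<close>

lemma partial_svd_Suc:
  assumes d: "partial_svd N1 N2 L k u v \<sigma>" and "s > 0"
    and w: "dot N2 w w = 1" and u': "dot N1 u' u' = 1"
    and Rw: "\<forall>a. matvec N2 (svd_residual L k u v \<sigma>) w a = s * u' a"
    and RTu: "\<forall>b<N2. matvec_T N1 (svd_residual L k u v \<sigma>) u' b = s * w b"
  shows "partial_svd N1 N2 L (Suc k) (u(k := u')) (v(k := w)) (\<sigma>(k := s))"
proof -
  note orth = svd_residual_pair_orthogonal[OF d \<open>s > 0\<close> _ Rw RTu]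
  have w_orth: "dot N2 w (v t) = 0" and u'_orth: "dot N1 u' (u t) = 0" if "t < k" for t
    using orth[OF that] by simp_all
  have "(\<Sum>t<k. \<sigma> t * u t a * dot N2 (v t) w) = 0" for a
    using w_orth by (simp add: dot_commute[of N2 "v _"])
  then have Lw: "matvec N2 L w a = s * u' a" for a
    using Rw unfolding matvec_svd_residual by simp
  have "(\<Sum>t<k. \<sigma> t * v t b * dot N1 (u t) u') = 0" for b
    using u'_orth by (simp add: dot_commute[of N1 "u _"])
  then have LTu': "matvec_T N1 L u' b = s * w b" if "b < N2" for b
    using RTu that unfolding matvec_T_svd_residual by simp
  have "orthonormal N1 (u(k := u')) {..<Suc k}"
    unfolding lessThan_Suc using d u' u'_orth unfolding partial_svd_def
    by (intro orthonormal_insert) auto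
  moreover have "orthonormal N2 (v(k := w)) {..<Suc k}"
    unfolding lessThan_Suc using d w w_orth unfolding partial_svd_def
    by (intro orthonormal_insert) auto
  moreover have "\<forall>t<Suc k. (\<sigma>(k := s)) t > 0"
    using d \<open>s > 0\<close> unfolding partial_svd_def by (simp add: less_Suc_eq)
  moreover have "\<forall>t<Suc k. \<forall>a<N1. matvec N2 L ((v(k := w)) t) a = (\<sigma>(k := s)) t * (u(k := u')) t a"
    using d Lw unfolding partial_svd_def by (simp add: less_Suc_eq)
  moreover have "\<forall>t<Suc k. \<forall>b<N2. matvec_T N1 L ((u(k := u')) t) b = (\<sigma>(k := s)) t * (v(k := w)) t b"
    using d LTu' unfolding partial_svd_def by (simp add: less_Suc_eq)
  ultimately show ?thesis
    unfolding partial_svd_def by blast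
qed

lemma partial_svd_length_le:
  assumes "partial_svd N1 N2 L k u v \<sigma>"
  shows "k \<le> N2"
proof -
  have "card {..<k} \<le> card {..<N2}"
    using assms in_span_unit_vec unfolding partial_svd_def
    by (intro card_orthonormal_le_span[of N2 v "{..<k}" "{..<N2}" unit_vec]) auto
  then show ?thesis by simp
qed

lemma exists_exact_partial_svd:
  "\<exists>k u v \<sigma>. partial_svd N1 N2 L k u v \<sigma> \<and>
    (\<forall>a<N1. \<forall>b<N2. L (a,b) = (\<Sum>t<k. \<sigma> t * u t a * v t b))"
proof -
  let ?P = "\<lambda>k. \<exists>u v \<sigma>. partial_svd N1 N2 L k u v \<sigma>"
  have "?P 0"
    unfolding partial_svd_def orthonormal_def by blast
  then obtain k where "?P k" and k_max: "\<forall>k'. ?P k' \<longrightarrow> k' \<le> k"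
    using Nat.ex_has_greatest_nat[of ?P 0 N2] partial_svd_length_le by blast
  then obtain u v \<sigma> where d: "partial_svd N1 N2 L k u v \<sigma>" by blast
  have "svd_residual L k u v \<sigma> (a,b) = 0" if a: "a < N1" and b: "b < N2" for a b
  proof (rule ccontr)
    assume "svd_residual L k u v \<sigma> (a,b) \<noteq> 0"
    then obtain s w u' where "s > 0" "dot N2 w w = 1" "dot N1 u' u' = 1"
      "\<forall>a. matvec N2 (svd_residual L k u v \<sigma>) w a = s * u' a"
      "\<forall>b<N2. matvec_T N1 (svd_residual L k u v \<sigma>) u' b = s * w b"
      using exists_singular_pair[where R = "svd_residual L k u v \<sigma>", OF a b \<open>svd_residual L k u v \<sigma> (a,b) \<noteq> 0\<close>] by blast
    then have "?P (Suc k)"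
      using partial_svd_Suc[OF d] by blast
    then show False
      using k_max by fastforce
  qed
  then show ?thesis
    using d unfolding svd_residual_def by fastforce
qed

lemma in_span_of_insert_dependent:
  assumes indep: "lin_independent N X J" and "finite J" "b \<notin> J"
    and dep: "\<not> lin_independent N X (insert b J)"
  shows "in_span N X J (X b)"
proof -
  obtain c where c: "\<forall>i<N. (\<Sum>t\<in>insert b J. c t * X t i) = 0" and nz: "\<exists>t\<in>insert b J. c t \<noteq> 0"
    using dep unfolding lin_independent_def by blast
  have sum: "c b * X b i + (\<Sum>t\<in>J. c t * X t i) = 0" if "i < N" for i
    using c that \<open>finite J\<close> \<open>b \<notin> J\<close> by simp
  have "c b \<noteq> 0"
  proof
    assume "c b = 0"
    then have "\<forall>i<N. (\<Sum>t\<in>J. c t * X t i) = 0"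
      using sum by simp
    then have "\<forall>t\<in>J. c t = 0"
      using indep[unfolded lin_independent_def, rule_format, of c] by blast
    then show False
      using nz \<open>c b = 0\<close> by blast
  qed
  have "X b i = (\<Sum>t\<in>J. (- c t / c b) * X t i)" if "i < N" for i
  proof -
    have "(\<Sum>t\<in>J. (- c t / c b) * X t i) = - (\<Sum>t\<in>J. c t * X t i) / c b"
      by (simp add: sum_divide_distrib sum_negf)
    also have "\<dots> = - (- (c b * X b i)) / c b"
      using sum[OF that] by (simp add: add_eq_0_iff2)
    also have "\<dots> = X b i"
      using \<open>c b \<noteq> 0\<close> by simp
    finally show ?thesis ..
  qed
  then show ?thesis
    unfolding in_span_def by (intro exI[of _ "\<lambda>t. - c t / c b"]) blast
qed

lemma in_span_of_max_lin_independent: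
  assumes "J \<subseteq> K" "finite K" "lin_independent N X J"
    and max: "\<forall>J'. J' \<subseteq> K \<and> lin_independent N X J' \<longrightarrow> card J' \<le> card J" and "b \<in> K"
  shows "in_span N X J (X b)"
proof -
  have "finite J"
    using assms(1,2) by (rule finite_subset)
  show ?thesis
  proof (cases "b \<in> J")
    case True
    then show ?thesis
      by (rule in_span_member[OF \<open>finite J\<close>])
  next
    case False
    have "\<not> lin_independent N X (insert b J)"
    proof
      assume "lin_independent N X (insert b J)"
      then have "card (insert b J) \<le> card J"
        using max[rule_format, of "insert b J"] assms(1,5) by simp
      then show False
        using False \<open>finite J\<close> by simp
    qed
    then show ?thesis
      by (rule in_span_of_insert_dependent[OF assms(3) \<open>finite J\<close> False])
  qed
qed

lemma colrank_attained:
  obtains J where "J \<subseteq> {..<N2}" "lin_independent N1 (\<lambda>j i. L (i,j)) J" "card J = colrank N1 N2 L"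
    "\<forall>J'. J' \<subseteq> {..<N2} \<and> lin_independent N1 (\<lambda>j i. L (i,j)) J' \<longrightarrow> card J' \<le> card J"
proof -
  define A where "A = {card J | J. J \<subseteq> {..<N2} \<and> lin_independent N1 (\<lambda>j i. L (i,j)) J}"
  have colrank: "colrank N1 N2 L = Max A"
    unfolding colrank_def A_def lin_independent_def by simp
  have "A \<subseteq> card ` Pow {..<N2}"
    unfolding A_def by auto
  then have "finite A"
    using finite_subset by blast
  moreover have "card {} \<in> A"
    unfolding A_def lin_independent_def by (intro CollectI exI[of _ "{}"]) simp
  ultimately have "Max A \<in> A"
    by (intro Max_in) auto
  then obtain J where J: "J \<subseteq> {..<N2}" "lin_independent N1 (\<lambda>j i. L (i,j)) J" "card J = Max A"
    unfolding A_def by auto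
  moreover have "card J' \<le> card J" if "J' \<subseteq> {..<N2} \<and> lin_independent N1 (\<lambda>j i. L (i,j)) J'" for J'
  proof -
    have "card J' \<in> A"
      using that unfolding A_def by blast
    then show ?thesis
      using Max_ge[OF \<open>finite A\<close>] J(3) by simp
  qed
  ultimately show ?thesis
    using that colrank by auto
qed

lemma colrank_eq_partial_svd:
  assumes d: "partial_svd N1 N2 L k u v \<sigma>"
    and L: "\<forall>a<N1. \<forall>b<N2. L (a,b) = (\<Sum>t<k. \<sigma> t * u t a * v t b)"
  shows "colrank N1 N2 L = k"
proof -
  define col where "col = (\<lambda>j i. L (i,j))"
  obtain J where J: "J \<subseteq> {..<N2}" "lin_independent N1 col J" "card J = colrank N1 N2 L"
    and J_max: "\<forall>J'. J' \<subseteq> {..<N2} \<and> lin_independent N1 col J' \<longrightarrow> card J' \<le> card J"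
    unfolding col_def by (rule colrank_attained)
  have "finite J"
    using J(1) finite_subset by blast
  have "in_span N1 u {..<k} (col j)" if "j < N2" for j
    unfolding in_span_def col_def using L that
    by (intro exI[of _ "\<lambda>t. \<sigma> t * v t j"]) (simp add: mult_ac)
  then have "card J \<le> card {..<k}"
    using J(1) by (intro card_lin_independent_le_span[OF J(2) \<open>finite J\<close>]) auto
  moreover have "k \<le> card J"
  proof -
    have col_span: "\<forall>b\<in>{..<N2}. in_span N1 col J (col b)"
      using in_span_of_max_lin_independent[OF J(1) _ J(2) J_max] by blast
    have "in_span N1 col J (u t)" if "t < k" for t
    proof -
      have "u t i = (\<Sum>b<N2. (v t b / \<sigma> t) * col b i)" if "i < N1" for i
        using d \<open>t < k\<close> that unfolding partial_svd_def matvec_def col_def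
        by (auto simp: sum_divide_distrib[symmetric] field_simps mult.commute)
      then have "in_span N1 col {..<N2} (u t)"
        unfolding in_span_def by (intro exI[of _ "\<lambda>b. v t b / \<sigma> t"]) blast
      then show ?thesis
        using col_span in_span_trans by blast
    qed
    then have "card {..<k} \<le> card J"
      using d \<open>finite J\<close> unfolding partial_svd_def by (intro card_orthonormal_le_span) auto
    then show ?thesis by simp
  qed
  ultimately show ?thesis
    using J(3) by simp
qed

lemma compact_svd_exists:
  assumes "colrank N1 N2 L = r"
  shows "\<exists>U s V. compact_svd N1 N2 r L U s V"
proof -
  obtain k u v \<sigma> where d: "partial_svd N1 N2 L k u v \<sigma>"
    and L: "\<forall>a<N1. \<forall>b<N2. L (a,b) = (\<Sum>t<k. \<sigma> t * u t a * v t b)"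
    using exists_exact_partial_svd by blast
  have "k = r"
    using colrank_eq_partial_svd[OF d L] assms by simp
  define U where "U = restrict (\<lambda>(a,t). u t a) ({..<N1} \<times> {..<k})"
  define V where "V = restrict (\<lambda>(b,t). v t b) ({..<N2} \<times> {..<k})"
  have "(\<Sum>a<N1. U (a,j) * U (a,l)) = dot N1 (u j) (u l)"
    and "(\<Sum>b<N2. V (b,j) * V (b,l)) = dot N2 (v j) (v l)"
    if "j < k" "l < k" for j l
    unfolding U_def V_def dot_def using that by (auto intro: sum.cong)
  moreover have "(\<Sum>j<k. U (a,j) * \<sigma> j * V (b,j)) = (\<Sum>j<k. \<sigma> j * u j a * v j b)"
    if "a < N1" "b < N2" for a b
    unfolding U_def V_def using that by (auto intro: sum.cong)
  ultimately have "compact_svd N1 N2 k L U \<sigma> V"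
    using d L unfolding compact_svd_def partial_svd_def orthonormal_def U_def V_def
    by simp
  then show ?thesis
    using \<open>k = r\<close> by blast
qed

lemma compact_svd_svdV:
  assumes "colrank N1 N2 L = r"
  shows "\<exists>U s. compact_svd N1 N2 r L U s (svdV N1 N2 r L)"
proof -
  have "\<exists>V U s. compact_svd N1 N2 r L U s V"
    using compact_svd_exists[OF assms] by blast
  then show ?thesis
    unfolding svdV_def by (rule someI_ex)
qed

section \<open>Row energies of the right singular vectors\<close>

lemma compact_svd_V_eq:
  assumes svd: "compact_svd N1 N2 r L U s V" and "b < N2" "k < r"
  shows "V (b,k) = (1 / s k) * (\<Sum>a<N1. U (a,k) * L (a,b))"
proof -
  have U: "\<forall>j<r. \<forall>l<r. (\<Sum>a<N1. U (a,j) * U (a,l)) = (if j = l then 1 else 0)"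
    and "s k > 0"
    and L: "\<forall>a<N1. L (a,b) = (\<Sum>j<r. U (a,j) * s j * V (b,j))"
    using svd \<open>b < N2\<close> \<open>k < r\<close> unfolding compact_svd_def by blast+
  have "(\<Sum>a<N1. U (a,k) * L (a,b)) = (\<Sum>j<r. (\<Sum>a<N1. U (a,k) * U (a,j)) * (s j * V (b,j)))"
    using L by (simp add: sum_distrib_left sum_distrib_right mult_ac sum.swap[of _ "{..<N1}"])
  also have "\<dots> = (\<Sum>j<r. if j = k then s k * V (b,k) else 0)"
    using U \<open>k < r\<close> by (intro sum.cong) auto
  also have "\<dots> = s k * V (b,k)"
    using \<open>k < r\<close> by simp
  finally show ?thesis
    using \<open>s k > 0\<close> by simp
qed

lemma compact_svd_total_energy:
  assumes "compact_svd N1 N2 r L U s V"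
  shows "(\<Sum>b<N2. \<Sum>j<r. (V (b,j))\<^sup>2) = real r"
proof -
  have "(\<Sum>b<N2. \<Sum>j<r. (V (b,j))\<^sup>2) = (\<Sum>j<r. \<Sum>b<N2. V (b,j) * V (b,j))"
    by (subst sum.swap) (simp add: power2_eq_square)
  also have "\<dots> = (\<Sum>j<r. 1)"
    using assms unfolding compact_svd_def by (intro sum.cong) auto
  finally show ?thesis by simp
qed

lemma sum_lessThan_supported_block:
  fixes f :: "nat \<Rightarrow> real"
  assumes "a + m \<le> N" and "\<And>b. b < N \<Longrightarrow> \<not> (a \<le> b \<and> b < a + m) \<Longrightarrow> f b = 0"
  shows "(\<Sum>b<N. f b) = (\<Sum>c<m. f (a + c))"
proof -
  have "(\<Sum>b<N. f b) = (\<Sum>b\<in>{a..<a + m}. f b)"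
    using assms by (intro sum.mono_neutral_right) auto
  also have "\<dots> = (\<Sum>c<m. f (a + c))"
    using sum.shift_bounds_nat_ivl[of f 0 a m] by (simp add: atLeast0LessThan add.commute)
  finally show ?thesis .
qed

text \<open>Extending E by zero outside the window turns it into an orthonormal family of R^N, against
  which Bessel's inequality is applied to each v j.\<close>

lemma orthonormal_window_energy_le:
  assumes v: "orthonormal N v J" "finite J" and "a0 + m \<le> N"
    and E: "orthonormal m E S" "finite S"
    and span: "\<forall>j\<in>J. in_span m E S (\<lambda>c. v j (a0 + c))"
  shows "(\<Sum>j\<in>J. dot m (\<lambda>c. v j (a0 + c)) (\<lambda>c. v j (a0 + c))) \<le> real (card S)"
proof -
  define F where "F t = (\<lambda>b. if a0 \<le> b \<and> b < a0 + m then E t (b - a0) else 0)" for t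
  have dot_F: "dot N (F t) y = dot m (E t) (\<lambda>c. y (a0 + c))" for t y
    unfolding dot_def by (subst sum_lessThan_supported_block[OF \<open>a0 + m \<le> N\<close>]) (auto simp: F_def)
  have "dot N (F t) (F t') = dot m (E t) (E t')" for t t'
    unfolding dot_F by (intro dot_cong) (auto simp: F_def)
  then have F: "orthonormal N F S"
    using E(1) unfolding orthonormal_def by simp
  have energy: "dot m (\<lambda>c. v j (a0 + c)) (\<lambda>c. v j (a0 + c)) = (\<Sum>t\<in>S. (dot N (F t) (v j))\<^sup>2)"
    if "j \<in> J" for j
  proof -
    have "in_span m E S (\<lambda>c. v j (a0 + c))"
      using span that by blast
    then obtain c where c: "\<forall>i<m. v j (a0 + i) = (\<Sum>t\<in>S. c t * E t i)"
      unfolding in_span_def by auto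
    have "dot N (F t) (v j) = c t" if "t \<in> S" for t
      using parseval(1)[OF E _ that, of "\<lambda>i. v j (a0 + i)" c] c
      unfolding dot_F by (simp add: dot_commute)
    then show ?thesis
      using parseval(2)[OF E, of "\<lambda>i. v j (a0 + i)" c] c by simp
  qed
  have "(\<Sum>j\<in>J. dot m (\<lambda>c. v j (a0 + c)) (\<lambda>c. v j (a0 + c))) = (\<Sum>t\<in>S. \<Sum>j\<in>J. (dot N (F t) (v j))\<^sup>2)"
    using energy by (simp add: sum.swap[of _ S])
  also have "\<dots> \<le> (\<Sum>t\<in>S. dot N (F t) (F t))"
    by (intro sum_mono bessel[OF v])
  also have "\<dots> = real (card S)"
    using F unfolding orthonormal_def by simp
  finally show ?thesis .
qed

lemma compact_svd_block_energy_le: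
  assumes svd: "compact_svd N1 N2 r L U s V" and "a0 + m \<le> N2"
    and block: "\<forall>a<N1. \<forall>c<m. L (a, a0 + c) = (\<Sum>l<d. A (a,l) * B (l,c))"
  shows "(\<Sum>c<m. \<Sum>j<r. (V (a0 + c, j))\<^sup>2) \<le> real d"
proof -
  define v where "v j = (\<lambda>b. V (b,j))" for j
  have v: "orthonormal N2 v {..<r}"
    using svd unfolding compact_svd_def orthonormal_def dot_def v_def by auto
  have v_span: "in_span m (\<lambda>l c. B (l,c)) {..<d} (\<lambda>c. v j (a0 + c))" if "j < r" for j
  proof -
    have "v j (a0 + c) = (\<Sum>l<d. ((1 / s j) * (\<Sum>a<N1. U (a,j) * A (a,l))) * B (l,c))" if "c < m" for c
    proof -
      have "v j (a0 + c) = (1 / s j) * (\<Sum>a<N1. \<Sum>l<d. U (a,j) * A (a,l) * B (l,c))"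
        unfolding v_def using compact_svd_V_eq[OF svd _ \<open>j < r\<close>] block \<open>c < m\<close> \<open>a0 + m \<le> N2\<close>
        by (simp add: sum_distrib_left sum_divide_distrib mult_ac)
      then show ?thesis
        by (simp add: sum_distrib_left sum_distrib_right mult_ac sum.swap[of _ "{..<N1}"])
    qed
    then show ?thesis
      unfolding in_span_def by (intro exI[of _ "\<lambda>l. (1 / s j) * (\<Sum>a<N1. U (a,j) * A (a,l))"]) blast
  qed
  obtain E S where S: "S \<subseteq> {..<d}" "orthonormal m E S" "\<forall>l<d. in_span m E S (\<lambda>c. B (l,c))"
    using gram_schmidt[of "{..<d}" m "\<lambda>l c. B (l,c)"] by auto
  have "finite S"
    using S(1) finite_subset by blast
  have E_span: "in_span m E S (\<lambda>c. v j (a0 + c))" if "j < r" for j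
    by (rule in_span_trans[OF _ v_span[OF that]]) (use S(3) in auto)
  have "(\<Sum>c<m. \<Sum>j<r. (V (a0 + c, j))\<^sup>2) = (\<Sum>j<r. dot m (\<lambda>c. v j (a0 + c)) (\<lambda>c. v j (a0 + c)))"
    unfolding dot_def v_def by (subst sum.swap) (simp add: power2_eq_square)
  also have "\<dots> \<le> real (card S)"
    by (rule orthonormal_window_energy_le[OF v _ \<open>a0 + m \<le> N2\<close> S(2) \<open>finite S\<close>])
      (use E_span in auto)
  also have "\<dots> \<le> real d"
    using card_mono[OF _ S(1)] by simp
  finally show ?thesis .
qed

lemma mu_v_ge_row_energy:
  assumes "colrank N1 N2 L = r" "r > 0" "b < N2"
  shows "(\<Sum>j<r. (svdV N1 N2 r L (b,j))\<^sup>2) * real N2 / real r \<le> mu_v N1 N2 r L"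
proof -
  let ?V = "svdV N1 N2 r L"
  let ?M = "{\<mu>. \<forall>i<N2. (\<Sum>j<r. (?V (i,j))\<^sup>2) \<le> \<mu> * real r / real N2}"
  obtain U s where svd: "compact_svd N1 N2 r L U s ?V"
    using compact_svd_svdV[OF assms(1)] by blast
  have "(\<Sum>j<r. (?V (i,j))\<^sup>2) \<le> real r" if "i < N2" for i
    using member_le_sum[of i "{..<N2}" "\<lambda>i. \<Sum>j<r. (?V (i,j))\<^sup>2"] that
    unfolding compact_svd_total_energy[OF svd] by (simp add: sum_nonneg)
  then have "real N2 \<in> ?M"
    using \<open>b < N2\<close> by simp
  then have "?M \<noteq> {}" by blast
  moreover have "(\<Sum>j<r. (?V (b,j))\<^sup>2) * real N2 / real r \<le> \<mu>" if "\<mu> \<in> ?M" for \<mu>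
    using that assms(2,3) by (simp add: field_simps)
  ultimately show ?thesis
    unfolding mu_v_def by (rule cInf_greatest)
qed

section \<open>The cluster matrix\<close>

lemma offs_Suc: "offs ns (Suc i) = offs ns i + ns i"
  unfolding offs_def by simp

lemma offs_mono: "i \<le> j \<Longrightarrow> offs ns i \<le> offs ns j"
  unfolding offs_def by (rule sum_mono2) auto

lemma offs_block_le: "i < n \<Longrightarrow> offs ns i + ns i \<le> offs ns n"
  using offs_mono[of "Suc i" n ns] by (simp add: offs_Suc)

lemma offs_block_unique:
  assumes "c < ns i" "offs ns j \<le> offs ns i + c" "offs ns i + c < offs ns j + ns j"
  shows "j = i"
proof (rule ccontr)
  assume "j \<noteq> i"
  then consider "Suc j \<le> i" | "Suc i \<le> j" by linarith
  then show False
    using offs_mono[of "Suc j" i ns] offs_mono[of "Suc i" j ns] assms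
    unfolding offs_Suc by cases linarith+
qed

lemma clusterL_block:
  assumes "i < n" "c < ns i" "a < N1"
  shows "clusterL N1 n d ns U Q (a, offs ns i + c) = (\<Sum>l<d. U i (a,l) * Q i (l,c))"
proof -
  let ?b = "offs ns i + c"
  have "?b < (\<Sum>i<n. ns i)"
    using offs_block_le[OF assms(1), of ns] assms(2) by (simp add: offs_def)
  moreover have "(THE j. j < n \<and> offs ns j \<le> ?b \<and> ?b < offs ns j + ns j) = i"
    using assms(1,2) offs_block_unique[of c ns i] by (intro the_equality) auto
  ultimately show ?thesis
    unfolding clusterL_def using assms(3) by (simp add: Let_def)
qed

lemma sum_lessThan_offs:
  fixes f :: "nat \<Rightarrow> real"
  shows "(\<Sum>b<offs ns n. f b) = (\<Sum>i<n. \<Sum>c<ns i. f (offs ns i + c))"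
proof (induction n)
  case 0
  then show ?case by (simp add: offs_def)
next
  case (Suc n)
  have "(\<Sum>b<a + m. f b) = (\<Sum>b<a. f b) + (\<Sum>c<m. f (a + c))" for a m
    by (induction m) (simp_all add: add.assoc)
  then show ?case
    using Suc.IH by (simp add: offs_Suc)
qed

lemma sum_eq_card_bound_imp_eq:
  fixes B :: "nat \<Rightarrow> real"
  assumes "\<forall>i<n. B i \<le> d" "(\<Sum>i<n. B i) = real n * d" "i0 < n"
  shows "B i0 = d"
proof -
  have "(\<Sum>i\<in>{..<n} - {i0}. B i) \<le> real (card ({..<n} - {i0})) * d"
    using assms(1) by (intro sum_bounded_above) auto
  moreover have "(\<Sum>i<n. B i) = B i0 + (\<Sum>i\<in>{..<n} - {i0}. B i)"
    using assms(3) by (simp add: sum.remove)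
  ultimately have "real n * d \<le> B i0 + (real n - 1) * d"
    using assms(2,3) by (simp add: of_nat_diff)
  moreover have "B i0 \<le> d"
    using assms(1,3) by blast
  ultimately show ?thesis
    by (simp add: algebra_simps)
qed

lemma exists_ge_average:
  fixes f :: "nat \<Rightarrow> real"
  assumes "m > 0" "A \<le> (\<Sum>c<m. f c)"
  shows "\<exists>c<m. A / real m \<le> f c"
proof (rule ccontr)
  assume "\<not> (\<exists>c<m. A / real m \<le> f c)"
  then have "(\<Sum>c<m. f c) < real (card {..<m}) * (A / real m)"
    using assms(1) by (intro sum_bounded_above_strict) auto
  then show False
    using assms by simp
qed

lemma mu_v_clusterL_ge:
  assumes "r = n * d" "d > 0" "\<forall>i<n. ns i \<ge> 1" "N2 = (\<Sum>i<n. ns i)" "i0 < n"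
    and "colrank N1 N2 (clusterL N1 n d ns U Q) = r"
  shows "real N2 / (real n * real (ns i0)) \<le> mu_v N1 N2 r (clusterL N1 n d ns U Q)"
proof -
  let ?L = "clusterL N1 n d ns U Q"
  define energy where "energy b = (\<Sum>j<r. (svdV N1 N2 r ?L (b,j))\<^sup>2)" for b
  define B where "B i = (\<Sum>c<ns i. energy (offs ns i + c))" for i
  obtain U' s where svd: "compact_svd N1 N2 r ?L U' s (svdV N1 N2 r ?L)"
    using compact_svd_svdV[OF assms(6)] by blast
  have N2: "N2 = offs ns n"
    unfolding assms(4) offs_def ..
  have "B i \<le> real d" if "i < n" for i
    unfolding B_def energy_def
    by (rule compact_svd_block_energy_le[OF svd])
      (use offs_block_le[OF that] clusterL_block[OF that] N2 in auto)
  moreover have "(\<Sum>i<n. B i) = real n * real d"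
    using compact_svd_total_energy[OF svd] assms(1)
    unfolding N2 sum_lessThan_offs B_def energy_def by simp
  ultimately have "B i0 = real d"
    using assms(5) by (intro sum_eq_card_bound_imp_eq) auto
  then obtain c where "c < ns i0" and c: "real d / real (ns i0) \<le> energy (offs ns i0 + c)"
    using exists_ge_average[of "ns i0" "real d"] assms(3,5) unfolding B_def by force
  then have "offs ns i0 + c < N2"
    using offs_block_le[OF assms(5), of ns] N2 by simp
  have "real N2 / (real n * real (ns i0)) = real d / real (ns i0) * real N2 / real r"
    using assms(1,2) by simp
  also have "\<dots> \<le> energy (offs ns i0 + c) * real N2 / real r"
    using c by (intro divide_right_mono mult_right_mono) auto
  also have "\<dots> \<le> mu_v N1 N2 r ?L"
    unfolding energy_def using \<open>offs ns i0 + c < N2\<close> assms(1,2,5,6) by (intro mu_v_ge_row_energy) auto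
  finally show ?thesis .
qed

lemma threshold_lt_mu_v_clusterL:
  assumes "n \<ge> 1" "n dvd r" "r > 0" "\<forall>i<n. ns i \<ge> 1" "N2 = (\<Sum>i<n. ns i)"
    and "colrank N1 N2 (clusterL N1 n (r div n) ns U Q) = r"
  shows "(1 / real n) * (0.5 * real N2 / real (Min (ns ` {..<n})))
    < mu_v N1 N2 r (clusterL N1 n (r div n) ns U Q)"
proof -
  have "ns ` {..<n} \<noteq> {}"
    using assms(1) by (simp add: lessThan_empty_iff)
  then have "Min (ns ` {..<n}) \<in> ns ` {..<n}"
    by (intro Min_in) auto
  then obtain i0 where i0: "i0 < n" "ns i0 = Min (ns ` {..<n})"
    by auto
  have r: "r = n * (r div n)" and "r div n > 0"
    using assms(2,3) by (auto elim!: dvdE)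
  define \<beta> where "\<beta> = real N2 / (real n * real (ns i0))"
  have "1 \<le> ns i0" "ns i0 \<le> N2"
    unfolding assms(5) using assms(4) i0(1) by (auto intro: member_le_sum)
  then have "\<beta> > 0"
    unfolding \<beta>_def using assms(1) by simp
  have "(1 / real n) * (0.5 * real N2 / real (Min (ns ` {..<n}))) = \<beta> / 2"
    unfolding \<beta>_def i0(2)[symmetric] by simp
  also have "\<dots> < \<beta>"
    using \<open>\<beta> > 0\<close> by simp
  also have "\<beta> \<le> mu_v N1 N2 r (clusterL N1 n (r div n) ns U Q)"
    unfolding \<beta>_def by (rule mu_v_clusterL_ge[OF r \<open>r div n > 0\<close> assms(4,5) i0(1) assms(6)])
  finally show ?thesis .
qed

lemma one_le_sum_powr_of_ln_Max_le_0:
  fixes n :: nat and ns :: "nat \<Rightarrow> nat"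
  assumes "n \<ge> 1" "\<forall>i<n. ns i \<ge> 1" "ln (real (Max (ns ` {..<n}))) \<le> 0"
  shows "1 \<le> (\<Sum>i<n. real (ns i) powr (-5))"
proof -
  have "ns 0 \<le> Max (ns ` {..<n})" "1 \<le> ns 0"
    using assms(1,2) by (auto intro: Max_ge)
  then have "0 < real (Max (ns ` {..<n}))"
    by linarith
  then have "Max (ns ` {..<n}) \<le> 1"
    using assms(3) by (simp add: ln_le_zero_iff)
  then have "ns 0 = 1"
    using \<open>ns 0 \<le> Max (ns ` {..<n})\<close> \<open>1 \<le> ns 0\<close> by linarith
  then show ?thesis
    using member_le_sum[of 0 "{..<n}" "\<lambda>i. real (ns i) powr (-5)"] assms(1) by simp
qed

theorem lemma2:
  fixes M :: "'a measure" and n N1 N2 r :: nat and ns :: "nat \<Rightarrow> nat"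
    and U Q :: "nat \<Rightarrow> 'a \<Rightarrow> rmat"
  assumes "prob_space M"
    and "n \<ge> 1" and "n dvd r"
    and "\<forall>i<n. ns i \<ge> 1"
    and "N2 = (\<Sum>i<n. ns i)"
    and "\<forall>i<n. unif_colspace M N1 (r div n) (U i)"
    and "\<forall>i<n. unif_rowspace M (r div n) (ns i) (Q i)"
    and "prob_space.indep_vars M (\<lambda>(i,b). if b then matM N1 (r div n) else matM (r div n) (ns i))
           (\<lambda>(i,b). if b then U i else Q i) ({..<n} \<times> (UNIV :: bool set))"
    and "AE \<omega> in M. colrank N1 N2 (clusterL N1 n (r div n) ns (\<lambda>i. U i \<omega>) (\<lambda>i. Q i \<omega>)) = r"
    and "real r / real n \<ge> 18 * ln (real (Max (ns ` {..<n})))"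
    and "\<forall>i<n. real (ns i) \<ge> 96 * (real r / real n) * ln (real (ns i))"
  shows "measure M {\<omega> \<in> space M.
            mu_v N1 N2 r (clusterL N1 n (r div n) ns (\<lambda>i. U i \<omega>) (\<lambda>i. Q i \<omega>))
              < (1 / real n) * (0.5 * real N2 / real (Min (ns ` {..<n})))}
         \<le> 2 * (\<Sum>i<n. real (ns i) powr (-5))"
proof (cases "r = 0")
  case True
  then have "1 \<le> (\<Sum>i<n. real (ns i) powr (-5))"
    using assms(10) by (intro one_le_sum_powr_of_ln_Max_le_0[OF assms(2,4)]) simp
  then show ?thesis
    by (intro order_trans[OF prob_space.prob_le_1[OF assms(1)]]) simp
next
  case False
  from assms(9) have "AE \<omega> in M. \<not> mu_v N1 N2 r (clusterL N1 n (r div n) ns (\<lambda>i. U i \<omega>) (\<lambda>i. Q i \<omega>))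
      < (1 / real n) * (0.5 * real N2 / real (Min (ns ` {..<n})))"
    by (rule eventually_mono)
      (use threshold_lt_mu_v_clusterL[OF assms(2,3) _ assms(4,5)] False in force)
  then show ?thesis
    unfolding measure_def by (simp add: emeasure_eq_0_AE sum_nonneg del: times_divide_eq_right)
qed

end
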